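(* Let $N,n\in\mathbb{N}$ and let $\{\mathcal{G}_i\}_{i=1}^n$ be a set of directed regular graphs without loops on the same set of $N$ vertices. Then there exists an undirected graph $\mathcal{G}$ such that $\operatorname{Aut}\mathcal{G}=\bigcap_{i=1}^n\operatorname{Aut}\mathcal{G}_i$.
   Context: A directed graph is regular if every vertex has the same in-degree and out-degree $d$. The intersection is taken inside the permutation group of the common vertex set; the equality is understood as an isomorphism of groups induced by the natural action of common automorphisms on $\mathcal{G}$. *)

theory Defs
  imports "HOL-Combinatorics.Permutations"
begin

definition loopless_digraph :: "'a set \<Rightarrow> ('a \<times> 'a) set \<Rightarrow> bool" where
  "loopless_digraph V A \<longleftrightarrow> A \<subseteq> V \<times> V \<and> (\<forall>v. (v, v) \<notin> A)"

definition regular_digraph :: "'a set \<Rightarrow> ('a \<times> 'a) set \<Rightarrow> bool" where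
  "regular_digraph V A \<longleftrightarrow> (\<exists>d::nat. \<forall>v\<in>V.
      card {u. (v, u) \<in> A} = d \<and> card {u. (u, v) \<in> A} = d)"

definition graph_aut :: "'a set \<Rightarrow> ('a \<times> 'a) set \<Rightarrow> ('a \<Rightarrow> 'a) set" where
  "graph_aut V A = {\<sigma>. \<sigma> permutes V \<and>
      (\<forall>x\<in>V. \<forall>y\<in>V. (x, y) \<in> A \<longleftrightarrow> (\<sigma> x, \<sigma> y) \<in> A)}"

definition undirected_graph :: "'b set \<Rightarrow> ('b \<times> 'b) set \<Rightarrow> bool" where
  "undirected_graph W E \<longleftrightarrow> E \<subseteq> W \<times> W \<and> sym E \<and> (\<forall>v. (v, v) \<notin> E)"

definition common_aut :: "'a set \<Rightarrow> nat \<Rightarrow> (nat \<Rightarrow> ('a \<times> 'a) set) \<Rightarrow> ('a \<Rightarrow> 'a) set" where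
  "common_aut V n A = {\<sigma>. \<sigma> permutes V \<and> (\<forall>i\<in>{1..n}. \<sigma> \<in> graph_aut V (A i))}"

definition restrict_Inl :: "'a set \<Rightarrow> ('a + 'c \<Rightarrow> 'a + 'c) \<Rightarrow> 'a \<Rightarrow> 'a" where
  "restrict_Inl V \<tau> = (\<lambda>v. if v \<in> V then projl (\<tau> (Inl v)) else v)"

end

theory Submission
  imports Defs "HOL-Library.Nat_Bijection" "HOL-Library.Countable_Set"
begin

(* Every relation A i is encoded in a single undirected graph. Besides the vertices Inl x for x in V,
   each ordered pair (x, y) gets a tail vertex adjacent to x and a head vertex adjacent to y and to
   the tail, and a path p 0, ..., p (2n + 6) serves as a rigid ruler: p 0 is the only vertex of
   degree 1, the odd path vertices have degree 2 and all vertices off the path have degree at least 3,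
   so every automorphism fixes the path pointwise. Since p (2n + 6), p (2n + 2) and p (2n + 4) are
   joined to all of V, all tails and all heads respectively, an automorphism preserves these classes
   and moves tails and heads as the induced permutation of V moves pairs; as p (2i) is joined to the
   tail of (x, y) exactly when (x, y) is an arc of A i, the induced permutation preserves every A i.
   Conversely every common automorphism extends to the graph. *)

lemma graph_aut_permutes: "t \<in> graph_aut W E \<Longrightarrow> t permutes W"
  by (simp add: graph_aut_def)

lemma graph_aut_edge_iff:
  "t \<in> graph_aut W E \<Longrightarrow> a \<in> W \<Longrightarrow> b \<in> W \<Longrightarrow> (t a, t b) \<in> E \<longleftrightarrow> (a, b) \<in> E"
  by (simp add: graph_aut_def)

lemma graph_aut_edge: "E \<subseteq> W \<times> W \<Longrightarrow> t \<in> graph_aut W E \<Longrightarrow> (a, b) \<in> E \<Longrightarrow> (t a, t b) \<in> E"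
  by (auto simp: graph_aut_def)

lemma graph_aut_Image:
  assumes "E \<subseteq> W \<times> W" "t \<in> graph_aut W E" "v \<in> W"
  shows "E `` {t v} = t ` (E `` {v})"
proof
  show "t ` (E `` {v}) \<subseteq> E `` {t v}"
    using graph_aut_edge[OF assms(1,2)] by blast
  show "E `` {t v} \<subseteq> t ` (E `` {v})"
  proof
    fix w assume w: "w \<in> E `` {t v}"
    then obtain u where "u \<in> W" "w = t u"
      using assms(1) permutes_image[OF graph_aut_permutes[OF assms(2)]] by blast
    with w assms show "w \<in> t ` (E `` {v})"
      by (auto simp: graph_aut_def)
  qed
qed

lemma graph_aut_degree:
  assumes "E \<subseteq> W \<times> W" "t \<in> graph_aut W E" "v \<in> W"
  shows "card (E `` {t v}) = card (E `` {v})"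
proof -
  have "inj_on t (E `` {v})"
    using permutes_inj[OF graph_aut_permutes[OF assms(2)]] by (rule inj_on_subset) simp
  then show ?thesis
    by (simp add: graph_aut_Image[OF assms] card_image)
qed

(* For empty V the path end p (2n + 6) would be a second vertex of degree 1. *)
locale digraph_family_encoding =
  fixes V :: "'a set" and n :: nat and A :: "nat \<Rightarrow> ('a \<times> 'a) set"
  assumes finite_V: "finite V" and V_nonempty: "V \<noteq> {}"
begin

definition idx :: "'a \<Rightarrow> nat" where "idx = to_nat_on V"

lemma idx_eq_iff [simp]: "x \<in> V \<Longrightarrow> y \<in> V \<Longrightarrow> idx x = idx y \<longleftrightarrow> x = y"
  using countable_finite[OF finite_V] by (simp add: idx_def)

(* Only even path vertices carry marks, so the odd ones keep degree 2. *)
abbreviation path_end :: nat where "path_end \<equiv> 2 * n + 6"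

definition path_vx :: "nat \<Rightarrow> 'a + nat" where
  "path_vx k = Inr (prod_encode (0, k))"

definition tail_vx :: "'a \<Rightarrow> 'a \<Rightarrow> 'a + nat" where
  "tail_vx x y = Inr (prod_encode (1, prod_encode (idx x, idx y)))"

definition head_vx :: "'a \<Rightarrow> 'a \<Rightarrow> 'a + nat" where
  "head_vx x y = Inr (prod_encode (2, prod_encode (idx x, idx y)))"

lemma path_vx_eq_iff [simp]: "path_vx j = path_vx k \<longleftrightarrow> j = k"
  by (simp add: path_vx_def)

lemma tail_vx_eq_iff [simp]:
  "x \<in> V \<Longrightarrow> y \<in> V \<Longrightarrow> x' \<in> V \<Longrightarrow> y' \<in> V \<Longrightarrow> tail_vx x y = tail_vx x' y' \<longleftrightarrow> x = x' \<and> y = y'"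
  by (simp add: tail_vx_def)

lemma head_vx_eq_iff [simp]:
  "x \<in> V \<Longrightarrow> y \<in> V \<Longrightarrow> x' \<in> V \<Longrightarrow> y' \<in> V \<Longrightarrow> head_vx x y = head_vx x' y' \<longleftrightarrow> x = x' \<and> y = y'"
  by (simp add: head_vx_def)

lemma vx_distinct [simp]:
  "path_vx k \<noteq> tail_vx x y" "tail_vx x y \<noteq> path_vx k"
  "path_vx k \<noteq> head_vx x y" "head_vx x y \<noteq> path_vx k"
  "tail_vx a b \<noteq> head_vx x y" "head_vx x y \<noteq> tail_vx a b"
  "Inl z \<noteq> path_vx k" "path_vx k \<noteq> Inl z"
  "Inl z \<noteq> tail_vx x y" "tail_vx x y \<noteq> Inl z"
  "Inl z \<noteq> head_vx x y" "head_vx x y \<noteq> Inl z"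
  by (auto simp: path_vx_def tail_vx_def head_vx_def)

definition vertices :: "('a + nat) set" where
  "vertices = Inl ` V \<union> path_vx ` {..path_end}
     \<union> case_prod tail_vx ` (V \<times> V) \<union> case_prod head_vx ` (V \<times> V)"

definition half_edges :: "('a + nat) rel" where
  "half_edges = (\<lambda>k. (path_vx k, path_vx (Suc k))) ` {..<path_end}
     \<union> (\<lambda>x. (path_vx path_end, Inl x)) ` V
     \<union> (\<lambda>(x, y). (Inl x, tail_vx x y)) ` (V \<times> V)
     \<union> (\<lambda>(x, y). (Inl y, head_vx x y)) ` (V \<times> V)
     \<union> (\<lambda>(x, y). (tail_vx x y, head_vx x y)) ` (V \<times> V)
     \<union> (\<lambda>(x, y). (path_vx (2 * n + 2), tail_vx x y)) ` (V \<times> V)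
     \<union> (\<lambda>(x, y). (path_vx (2 * n + 4), head_vx x y)) ` (V \<times> V)
     \<union> {(path_vx (2 * i), tail_vx x y) | i x y. i \<in> {1..n} \<and> (x, y) \<in> A i \<and> x \<in> V \<and> y \<in> V}"

definition edges :: "('a + nat) rel" where
  "edges = half_edges \<union> half_edges\<inverse>"

lemma edges_sym: "(a, b) \<in> edges \<longleftrightarrow> (b, a) \<in> edges"
  by (auto simp: edges_def)

lemma edges_iff [simp]:
  "(Inl x, Inl y) \<notin> edges"
  "x \<in> V \<Longrightarrow> a \<in> V \<Longrightarrow> b \<in> V \<Longrightarrow> (Inl x, tail_vx a b) \<in> edges \<longleftrightarrow> x = a"
  "x \<in> V \<Longrightarrow> a \<in> V \<Longrightarrow> b \<in> V \<Longrightarrow> (Inl x, head_vx a b) \<in> edges \<longleftrightarrow> x = b"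
  "x \<in> V \<Longrightarrow> (Inl x, path_vx k) \<in> edges \<longleftrightarrow> k = path_end"
  "a \<in> V \<Longrightarrow> b \<in> V \<Longrightarrow> c \<in> V \<Longrightarrow> d \<in> V \<Longrightarrow> (tail_vx a b, tail_vx c d) \<notin> edges"
  "a \<in> V \<Longrightarrow> b \<in> V \<Longrightarrow> c \<in> V \<Longrightarrow> d \<in> V \<Longrightarrow> (tail_vx a b, head_vx c d) \<in> edges \<longleftrightarrow> a = c \<and> b = d"
  "a \<in> V \<Longrightarrow> b \<in> V \<Longrightarrow> (tail_vx a b, path_vx k) \<in> edges \<longleftrightarrow>
     k = 2 * n + 2 \<or> (\<exists>i\<in>{1..n}. k = 2 * i \<and> (a, b) \<in> A i)"
  "a \<in> V \<Longrightarrow> b \<in> V \<Longrightarrow> c \<in> V \<Longrightarrow> d \<in> V \<Longrightarrow> (head_vx a b, head_vx c d) \<notin> edges"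
  "a \<in> V \<Longrightarrow> b \<in> V \<Longrightarrow> (head_vx a b, path_vx k) \<in> edges \<longleftrightarrow> k = 2 * n + 4"
  "(path_vx j, path_vx k) \<in> edges \<longleftrightarrow> k = Suc j \<and> j < path_end \<or> j = Suc k \<and> k < path_end"
  by (auto simp: edges_def half_edges_def)

lemma edges_converse_iff [simp]:
  "x \<in> V \<Longrightarrow> a \<in> V \<Longrightarrow> b \<in> V \<Longrightarrow> (tail_vx a b, Inl x) \<in> edges \<longleftrightarrow> x = a"
  "x \<in> V \<Longrightarrow> a \<in> V \<Longrightarrow> b \<in> V \<Longrightarrow> (head_vx a b, Inl x) \<in> edges \<longleftrightarrow> x = b"
  "x \<in> V \<Longrightarrow> (path_vx k, Inl x) \<in> edges \<longleftrightarrow> k = path_end"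
  "a \<in> V \<Longrightarrow> b \<in> V \<Longrightarrow> c \<in> V \<Longrightarrow> d \<in> V \<Longrightarrow> (head_vx c d, tail_vx a b) \<in> edges \<longleftrightarrow> a = c \<and> b = d"
  "a \<in> V \<Longrightarrow> b \<in> V \<Longrightarrow> (path_vx k, tail_vx a b) \<in> edges \<longleftrightarrow>
     k = 2 * n + 2 \<or> (\<exists>i\<in>{1..n}. k = 2 * i \<and> (a, b) \<in> A i)"
  "a \<in> V \<Longrightarrow> b \<in> V \<Longrightarrow> (path_vx k, head_vx a b) \<in> edges \<longleftrightarrow> k = 2 * n + 4"
  by (subst edges_sym; simp)+

lemma finite_vertices: "finite vertices"
  using finite_V by (simp add: vertices_def)

lemma edges_subset: "edges \<subseteq> vertices \<times> vertices"
  by (auto simp: edges_def half_edges_def vertices_def)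

lemma undirected_graph_edges: "undirected_graph vertices edges"
  using edges_subset edges_sym by (auto simp: undirected_graph_def sym_def edges_def half_edges_def)

lemma vertices_cases [consumes 1, case_names base path tail head]:
  assumes "w \<in> vertices"
  obtains (base) x where "x \<in> V" "w = Inl x"
  | (path) k where "k \<le> path_end" "w = path_vx k"
  | (tail) x y where "x \<in> V" "y \<in> V" "w = tail_vx x y"
  | (head) x y where "x \<in> V" "y \<in> V" "w = head_vx x y"
  using assms by (auto simp: vertices_def)

lemma in_vertices [simp]:
  "x \<in> V \<Longrightarrow> Inl x \<in> vertices"
  "k \<le> path_end \<Longrightarrow> path_vx k \<in> vertices"
  "x \<in> V \<Longrightarrow> y \<in> V \<Longrightarrow> tail_vx x y \<in> vertices"
  "x \<in> V \<Longrightarrow> y \<in> V \<Longrightarrow> head_vx x y \<in> vertices"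
  by (auto simp: vertices_def)

abbreviation degree :: "'a + nat \<Rightarrow> nat" where
  "degree v \<equiv> card (edges `` {v})"

lemma card_le_degree: "S \<subseteq> edges `` {v} \<Longrightarrow> card S \<le> degree v"
proof (rule card_mono)
  show "finite (edges `` {v})"
    using edges_subset finite_vertices by (blast intro: finite_subset)
qed

lemma three_le_degree:
  "x \<in> V \<Longrightarrow> 3 \<le> degree (Inl x)"
  "x \<in> V \<Longrightarrow> y \<in> V \<Longrightarrow> 3 \<le> degree (tail_vx x y)"
  "x \<in> V \<Longrightarrow> y \<in> V \<Longrightarrow> 3 \<le> degree (head_vx x y)"
  using card_le_degree[of "{path_vx path_end, tail_vx x x, head_vx x x}" "Inl x"]
    card_le_degree[of "{path_vx (2 * n + 2), Inl x, head_vx x y}" "tail_vx x y"]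
    card_le_degree[of "{path_vx (2 * n + 4), Inl y, tail_vx x y}" "head_vx x y"]
  by auto

lemma degree_path_odd:
  assumes "odd k" "k < path_end"
  shows "degree (path_vx k) = 2"
proof -
  have "edges `` {path_vx k} = {path_vx (k - 1), path_vx (k + 1)}"
  proof (intro equalityI subsetI)
    fix w assume "w \<in> edges `` {path_vx k}"
    then have "w \<in> vertices" "(path_vx k, w) \<in> edges"
      using edges_subset by auto
    then show "w \<in> {path_vx (k - 1), path_vx (k + 1)}"
      using assms by (cases rule: vertices_cases) auto
  qed (use assms in \<open>auto elim: oddE\<close>)
  then show ?thesis
    by simp
qed

lemma degree_eq_1_iff:
  assumes "v \<in> vertices"
  shows "degree v = 1 \<longleftrightarrow> v = path_vx 0"
proof
  have "edges `` {path_vx 0} = {path_vx 1}"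
  proof (intro equalityI subsetI)
    fix w assume "w \<in> edges `` {path_vx 0}"
    then have "w \<in> vertices" "(path_vx 0, w) \<in> edges"
      using edges_subset by auto
    then show "w \<in> {path_vx 1}"
      by (cases rule: vertices_cases) auto
  qed auto
  then show "v = path_vx 0 \<Longrightarrow> degree v = 1"
    by simp
  obtain x0 where "x0 \<in> V"
    using V_nonempty by blast
  show "degree v = 1 \<Longrightarrow> v = path_vx 0"
    using assms
  proof (cases rule: vertices_cases)
    case (path k)
    moreover have "2 \<le> degree (path_vx k)" if "0 < k"
    proof -
      have "{path_vx (k - 1), if k = path_end then Inl x0 else path_vx (k + 1)} \<subseteq> edges `` {path_vx k}"
        using that path(1) \<open>x0 \<in> V\<close> by auto
      moreover have "card {path_vx (k - 1), if k = path_end then Inl x0 else path_vx (k + 1)} = 2"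
        by simp
      ultimately show ?thesis
        using card_le_degree by metis
    qed
    ultimately show "degree v = 1 \<Longrightarrow> v = path_vx 0"
      by (cases "k = 0") auto
  qed (use three_le_degree in fastforce)+
qed

lemma path_neighbour_by_degree:
  assumes "j < path_end" "(path_vx j, w) \<in> edges" "degree w = degree (path_vx (Suc j))"
  shows "w = path_vx (Suc j) \<or> 0 < j \<and> w = path_vx (j - 1)"
proof -
  have "w \<in> vertices"
    using assms(2) edges_subset by auto
  then show ?thesis
  proof (cases rule: vertices_cases)
    case (path k)
    then show ?thesis
      using assms(2) by auto
  next
    case (base x)
    then show ?thesis
      using assms(1,2) by simp
  next
    case (tail x y)
    then have "odd (Suc j)" "Suc j < path_end"
      using assms(2) by auto
    then show ?thesis
      using tail assms(3) three_le_degree(2)[of x y] degree_path_odd by simp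
  next
    case (head x y)
    then have "odd (Suc j)" "Suc j < path_end"
      using assms(2) by auto
    then show ?thesis
      using head assms(3) three_le_degree(3)[of x y] degree_path_odd by simp
  qed
qed

abbreviation aut :: "('a + nat \<Rightarrow> 'a + nat) set" where
  "aut \<equiv> graph_aut vertices edges"

lemma aut_in_vertices: "t \<in> aut \<Longrightarrow> v \<in> vertices \<Longrightarrow> t v \<in> vertices"
  by (simp add: permutes_in_image[OF graph_aut_permutes])

lemma aut_eq_iff: "t \<in> aut \<Longrightarrow> t v = t w \<longleftrightarrow> v = w"
  by (simp add: permutes_inj[OF graph_aut_permutes] inj_eq)

lemma aut_fixes_path:
  assumes t: "t \<in> aut"
  shows "k \<le> path_end \<Longrightarrow> t (path_vx k) = path_vx k"
proof (induction k rule: less_induct)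
  case (less k)
  show ?case
  proof (cases k)
    case 0
    have "degree (t (path_vx 0)) = 1"
      using graph_aut_degree[OF edges_subset t] degree_eq_1_iff by simp
    then show ?thesis
      using degree_eq_1_iff aut_in_vertices[OF t] 0 by simp
  next
    case (Suc j)
    have "(path_vx j, t (path_vx k)) \<in> edges"
      using graph_aut_edge[OF edges_subset t, of "path_vx j" "path_vx k"] less Suc by simp
    moreover have "degree (t (path_vx k)) = degree (path_vx (Suc j))"
      using graph_aut_degree[OF edges_subset t] less Suc by simp
    ultimately have "t (path_vx k) = path_vx k \<or> 0 < j \<and> t (path_vx k) = path_vx (j - 1)"
      using path_neighbour_by_degree less Suc by simp
    moreover have "0 < j \<Longrightarrow> t (path_vx (j - 1)) = path_vx (j - 1)"
      using less Suc by simp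
    ultimately show ?thesis
      using aut_eq_iff[OF t, of "path_vx k" "path_vx (j - 1)"] Suc by auto
  qed
qed

lemma aut_image_eq_path_iff:
  "t \<in> aut \<Longrightarrow> k \<le> path_end \<Longrightarrow> t v = path_vx k \<longleftrightarrow> v = path_vx k"
  by (metis aut_fixes_path aut_eq_iff)

lemma aut_maps_Inl:
  assumes t: "t \<in> aut" and x: "x \<in> V"
  shows "t (Inl x) \<in> Inl ` V"
proof -
  have "t (Inl x) \<in> vertices"
    using aut_in_vertices[OF t] x by simp
  moreover have "(path_vx path_end, t (Inl x)) \<in> edges"
    using graph_aut_edge[OF edges_subset t, of "path_vx path_end" "Inl x"] aut_fixes_path[OF t] x
    by simp
  ultimately show ?thesis
    by (cases rule: vertices_cases) (use aut_image_eq_path_iff[OF t] in auto)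
qed

lemma aut_maps_tail:
  assumes t: "t \<in> aut" and "x \<in> V" "y \<in> V"
  shows "\<exists>a\<in>V. \<exists>b\<in>V. t (tail_vx x y) = tail_vx a b"
proof -
  have "t (tail_vx x y) \<in> vertices"
    using aut_in_vertices[OF t] assms by simp
  moreover have "(path_vx (2 * n + 2), t (tail_vx x y)) \<in> edges"
    using graph_aut_edge[OF edges_subset t, of "path_vx (2 * n + 2)" "tail_vx x y"]
      aut_fixes_path[OF t, of "2 * n + 2"] assms by simp
  ultimately show ?thesis
    by (cases rule: vertices_cases) (use aut_image_eq_path_iff[OF t] assms in auto)
qed

lemma aut_maps_head:
  assumes t: "t \<in> aut" and "x \<in> V" "y \<in> V"
  shows "\<exists>a\<in>V. \<exists>b\<in>V. t (head_vx x y) = head_vx a b"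
proof -
  have "t (head_vx x y) \<in> vertices"
    using aut_in_vertices[OF t] assms by simp
  moreover have "(path_vx (2 * n + 4), t (head_vx x y)) \<in> edges"
    using graph_aut_edge[OF edges_subset t, of "path_vx (2 * n + 4)" "head_vx x y"]
      aut_fixes_path[OF t, of "2 * n + 4"] assms by simp
  ultimately show ?thesis
    by (cases rule: vertices_cases) (use aut_image_eq_path_iff[OF t] assms in auto)
qed

lemma aut_Inl_eq:
  assumes "t \<in> aut" "x \<in> V"
  shows "restrict_Inl V t x \<in> V" "t (Inl x) = Inl (restrict_Inl V t x)"
  using aut_maps_Inl[OF assms] assms(2) by (auto simp: restrict_Inl_def)

lemma aut_tail_head_eq:
  assumes t: "t \<in> aut" and x: "x \<in> V" and y: "y \<in> V"
  defines "\<sigma> \<equiv> restrict_Inl V t"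
  shows "t (tail_vx x y) = tail_vx (\<sigma> x) (\<sigma> y) \<and> t (head_vx x y) = head_vx (\<sigma> x) (\<sigma> y)"
proof -
  obtain a b where ab: "a \<in> V" "b \<in> V" "t (tail_vx x y) = tail_vx a b"
    using aut_maps_tail[OF assms(1-3)] by blast
  obtain c d where cd: "c \<in> V" "d \<in> V" "t (head_vx x y) = head_vx c d"
    using aut_maps_head[OF assms(1-3)] by blast
  have \<sigma>x: "\<sigma> x \<in> V" "t (Inl x) = Inl (\<sigma> x)" and \<sigma>y: "\<sigma> y \<in> V" "t (Inl y) = Inl (\<sigma> y)"
    using aut_Inl_eq[OF t] x y unfolding \<sigma>_def by auto
  have "(t (Inl x), t (tail_vx x y)) \<in> edges"
    by (rule graph_aut_edge[OF edges_subset t]) (simp add: x y)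
  then have "a = \<sigma> x"
    using \<sigma>x ab by simp
  moreover have "(t (Inl y), t (head_vx x y)) \<in> edges"
    by (rule graph_aut_edge[OF edges_subset t]) (simp add: x y)
  then have "d = \<sigma> y"
    using \<sigma>y cd by simp
  moreover have "(t (tail_vx x y), t (head_vx x y)) \<in> edges"
    by (rule graph_aut_edge[OF edges_subset t]) (simp add: x y)
  then have "a = c \<and> b = d"
    using ab cd by simp
  ultimately show ?thesis
    using ab cd by simp
qed

lemma path_tail_edge_iff:
  "i \<in> {1..n} \<Longrightarrow> x \<in> V \<Longrightarrow> y \<in> V \<Longrightarrow> (path_vx (2 * i), tail_vx x y) \<in> edges \<longleftrightarrow> (x, y) \<in> A i"
  by auto

lemma restrict_Inl_aut_in_common_aut:
  assumes t: "t \<in> aut"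
  shows "restrict_Inl V t \<in> common_aut V n A"
proof -
  let ?\<sigma> = "restrict_Inl V t"
  have \<sigma>: "?\<sigma> x \<in> V" "t (Inl x) = Inl (?\<sigma> x)" if "x \<in> V" for x
    using aut_Inl_eq[OF t that] by auto
  have "inj_on ?\<sigma> V"
    by (rule inj_onI) (metis \<sigma>(2) aut_eq_iff[OF t] old.sum.inject(1))
  then have perm: "?\<sigma> permutes V"
    by (rule inj_imp_permutes) (use finite_V \<sigma>(1) in \<open>simp_all add: restrict_Inl_def\<close>)
  have "(?\<sigma> x, ?\<sigma> y) \<in> A i \<longleftrightarrow> (x, y) \<in> A i" if i: "i \<in> {1..n}" and xy: "x \<in> V" "y \<in> V" for i x y
  proof -
    have "(?\<sigma> x, ?\<sigma> y) \<in> A i \<longleftrightarrow> (path_vx (2 * i), tail_vx (?\<sigma> x) (?\<sigma> y)) \<in> edges"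
      using path_tail_edge_iff i \<sigma>(1) xy by simp
    also have "\<dots> \<longleftrightarrow> (t (path_vx (2 * i)), t (tail_vx x y)) \<in> edges"
      using aut_fixes_path[OF t, of "2 * i"] aut_tail_head_eq[OF t xy] i by simp
    also have "\<dots> \<longleftrightarrow> (path_vx (2 * i), tail_vx x y) \<in> edges"
      using graph_aut_edge_iff[OF t] i xy by simp
    also have "\<dots> \<longleftrightarrow> (x, y) \<in> A i"
      using path_tail_edge_iff i xy by simp
    finally show ?thesis .
  qed
  with perm show ?thesis
    by (auto simp: common_aut_def graph_aut_def)
qed

definition pair_of :: "'a + nat \<Rightarrow> 'a \<times> 'a" where
  "pair_of v = map_prod (from_nat_into V) (from_nat_into V) (prod_decode (snd (prod_decode (projr v))))"

lemma pair_of_tail_head [simp]: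
  "x \<in> V \<Longrightarrow> y \<in> V \<Longrightarrow> pair_of (tail_vx x y) = (x, y)"
  "x \<in> V \<Longrightarrow> y \<in> V \<Longrightarrow> pair_of (head_vx x y) = (x, y)"
  using countable_finite[OF finite_V] by (simp_all add: pair_of_def tail_vx_def head_vx_def idx_def)

definition extend :: "('a \<Rightarrow> 'a) \<Rightarrow> 'a + nat \<Rightarrow> 'a + nat" where
  "extend s v =
     (if v \<in> Inl ` V then Inl (s (projl v))
      else if v \<in> case_prod tail_vx ` (V \<times> V) then case_prod tail_vx (map_prod s s (pair_of v))
      else if v \<in> case_prod head_vx ` (V \<times> V) then case_prod head_vx (map_prod s s (pair_of v))
      else v)"

lemma extend_simps [simp]:
  "x \<in> V \<Longrightarrow> extend s (Inl x) = Inl (s x)"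
  "x \<in> V \<Longrightarrow> y \<in> V \<Longrightarrow> extend s (tail_vx x y) = tail_vx (s x) (s y)"
  "x \<in> V \<Longrightarrow> y \<in> V \<Longrightarrow> extend s (head_vx x y) = head_vx (s x) (s y)"
  "extend s (path_vx k) = path_vx k"
  by (auto simp: extend_def)

lemma extend_outside: "v \<notin> vertices \<Longrightarrow> extend s v = v"
  by (auto simp: extend_def vertices_def)

lemma aut_eq_extend_restrict_Inl:
  assumes t: "t \<in> aut"
  shows "extend (restrict_Inl V t) = t"
proof
  fix v
  show "extend (restrict_Inl V t) v = t v"
  proof (cases "v \<in> vertices")
    case True
    then show ?thesis
      by (cases rule: vertices_cases)
        (use aut_Inl_eq[OF t] aut_fixes_path[OF t] aut_tail_head_eq[OF t] in simp_all)
  next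
    case False
    then show ?thesis
      using permutes_not_in[OF graph_aut_permutes[OF t]] extend_outside by simp
  qed
qed

lemma restrict_Inl_extend: "s permutes V \<Longrightarrow> restrict_Inl V (extend s) = s"
  by (auto simp: restrict_Inl_def permutes_not_in)

lemma extend_in_aut:
  assumes "s \<in> common_aut V n A"
  shows "extend s \<in> aut"
proof -
  have perm: "s permutes V"
    using assms by (simp add: common_aut_def)
  have [simp]: "x \<in> V \<Longrightarrow> s x \<in> V" for x
    using permutes_in_image[OF perm] by simp
  have [simp]: "x \<in> V \<Longrightarrow> y \<in> V \<Longrightarrow> s x = s y \<longleftrightarrow> x = y" for x y
    using permutes_inj[OF perm] by (simp add: inj_eq)
  have [simp]: "i \<in> {1..n} \<Longrightarrow> x \<in> V \<Longrightarrow> y \<in> V \<Longrightarrow> (s x, s y) \<in> A i \<longleftrightarrow> (x, y) \<in> A i" for i x y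
    using assms by (auto simp: common_aut_def graph_aut_def)
  have "inj_on (extend s) vertices"
  proof (rule inj_onI)
    fix v w assume v: "v \<in> vertices" and w: "w \<in> vertices" and eq: "extend s v = extend s w"
    from v show "v = w"
      by (cases rule: vertices_cases) (use w eq in \<open>cases rule: vertices_cases; simp\<close>)+
  qed
  then have "extend s permutes vertices"
    by (rule inj_imp_permutes)
      (auto simp: finite_vertices extend_outside elim: vertices_cases)
  moreover have "(extend s v, extend s w) \<in> edges \<longleftrightarrow> (v, w) \<in> edges"
    if v: "v \<in> vertices" and w: "w \<in> vertices" for v w
    using v by (cases rule: vertices_cases) (use w in \<open>cases rule: vertices_cases; auto\<close>)+
  ultimately show ?thesis
    by (simp add: graph_aut_def)
qed

lemma bij_betw_restrict_Inl_aut: "bij_betw (restrict_Inl V) aut (common_aut V n A)"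
proof (rule bij_betw_byWitness[where f' = extend])
  show "\<forall>t\<in>aut. extend (restrict_Inl V t) = t"
    using aut_eq_extend_restrict_Inl by blast
  show "\<forall>s\<in>common_aut V n A. restrict_Inl V (extend s) = s"
    using restrict_Inl_extend by (simp add: common_aut_def)
  show "restrict_Inl V ` aut \<subseteq> common_aut V n A"
    using restrict_Inl_aut_in_common_aut by blast
  show "extend ` common_aut V n A \<subseteq> aut"
    using extend_in_aut by blast
qed

lemma aut_image_Inl: "t \<in> aut \<Longrightarrow> t ` Inl ` V = Inl ` V"
  using endo_inj_surj[of "Inl ` V" t] finite_V aut_maps_Inl
    permutes_inj_on[OF graph_aut_permutes] by blast

end

theorem proposition5p3:
  fixes V :: "'a set" and N n :: nat and A :: "nat \<Rightarrow> ('a \<times> 'a) set"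
  assumes "finite V" and "card V = N"
    and "\<forall>i\<in>{1..n}. loopless_digraph V (A i) \<and> regular_digraph V (A i)"
  shows "\<exists>(W :: ('a + nat) set) E.
           finite W \<and> Inl ` V \<subseteq> W \<and> undirected_graph W E \<and>
           (\<forall>\<tau>\<in>graph_aut W E. \<tau> ` (Inl ` V) = Inl ` V) \<and>
           bij_betw (restrict_Inl V) (graph_aut W E) (common_aut V n A)"
proof (cases "V = {}")
  case True
  have aut_empty: "graph_aut {} {} = {id}" and common_aut_empty: "common_aut V n A = {id}"
    using True by (auto simp: graph_aut_def common_aut_def)
  have "restrict_Inl V id = id"
    using True by (simp add: restrict_Inl_def id_def)
  then have "bij_betw (restrict_Inl V) (graph_aut {} {}) (common_aut V n A)"
    unfolding aut_empty common_aut_empty by (simp add: bij_betw_def)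
  moreover have "undirected_graph {} {}"
    by (simp add: undirected_graph_def)
  ultimately show ?thesis
    using True by (intro exI[of _ "{}"]) simp
next
  case False
  interpret digraph_family_encoding V n A
    using assms(1) False by unfold_locales
  show ?thesis
    using finite_vertices undirected_graph_edges aut_image_Inl bij_betw_restrict_Inl_aut
    by (intro exI[of _ vertices] exI[of _ edges]) auto
qed

end
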